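(* Let $K\ge 2$ and let $(\mathbf{H},D,\mathbf{Z})$ follow the conditionally symmetric multidimensional Gaussian mixture model (csmGmm) described in the context. Define the local false discovery rate $$lfdr(\mathbf{z})=\Pr(\mathbf{H}\in\mathcal{H}_0\mid \mathbf{Z}=\mathbf{z})=\frac{\sum_{l:\mathbf{h}^l\in\mathcal{H}_0}\sum_{m=1}^{M_{b_l}}\pi_{b_l m}\prod_{k=1}^K\phi(z_k-h^l_k\mu_{b_l,m,k})}{\sum_{l=0}^{3^K-1}\sum_{m=1}^{M_{b_l}}\pi_{b_l m}\prod_{k=1}^K\phi(z_k-h^l_k\mu_{b_l,m,k})},\qquad \mathbf{z}\in\mathbb{R}^K,$$ where $\phi$ is the standard normal density and $\mathcal{H}_0=\{\mathbf{h}\in\{-1,0,1\}^K:\sum_{k=1}^K|h_k|<K\}$. Then for every $k\in\{1,\dots,K\}$, with all coordinates $z_{k'}$, $k'\neq k$, held fixed, $lfdr(\mathbf{z})$ is non-increasing in $z_k$ on $z_k>0$ and non-decreasing in $z_k$ on $z_k<0$. Consequently the csmGmm never produces incongruous results: whenever $\mathbf{z},\mathbf{z}'\in\mathbb{R}^K$ satisfy $\mathrm{sign}(z_k)=\mathrm{sign}(z'_k)$ and $|z_k|\ge|z'_k|$ for all $k$, we have $lfdr(\mathbf{z})\le lfdr(\mathbf{z}')$.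
   Context: Setting: large-scale testing of the composite null $\bigcup_{k=1}^K\{\theta_k=0\}$ for a vector of $K$ parameters using a vector of test statistics $\mathbf{Z}=(Z_1,\dots,Z_K)^T$. The latent association configuration is $\mathbf{H}\in\{-1,0,1\}^K$ ($H_k=0$: $\theta_k=0$; $H_k=\pm1$: $\theta_k$ positive/negative). Enumerate all $3^K$ configurations as $\mathbf{h}^0,\dots,\mathbf{h}^{3^K-1}$ with $\mathbf{h}^0=(0,\dots,0)^T$. The binary representation of $\mathbf{h}^l$ is $b_l=\sum_{k=1}^K 2^{K-k}|h^l_k|\in\{0,\dots,2^K-1\}$; its $k$-th binary digit is $|h^l_k|$. csmGmm: for each $b\in\{0,\dots,2^K-1\}$ there is a positive integer $M_b$ (with $M_0=1$), mean-magnitude vectors $\boldsymbol{\mu}_{b,m}=(\mu_{b,m,1},\dots,\mu_{b,m,K})^T$, $m=1,\dots,M_b$, and probabilities $\pi_{bm}\ge0$. Here $\mu_{b,m,k}=0$ if the $k$-th binary digit of $b$ is $0$ and $\mu_{b,m,k}>0$ otherwise, and $\mu_{2^K-1,m,k}\ge\mu_{b,m',k}$ for all $b<2^K-1$ and all $m,m',k$. The joint law of $(\mathbf{H},D)$ is $\Pr(\mathbf{H}=\mathbf{h}^l,D=m)=\pi_{b_l m}$ for $m=1,\dots,M_{b_l}$ (so configurations with the same binary representation share mixing probabilities), with $\sum_{l=0}^{3^K-1}\sum_{m=1}^{M_{b_l}}\pi_{b_l m}=1$. Conditional on $\mathbf{H}=\mathbf{h}^l$, $D=m$, $\mathbf{Z}\sim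 N_K(\mathrm{diag}(\mathbf{h}^l)\boldsymbol{\mu}_{b_l,m},\mathbf{I}_K)$. *)

theory Defs
  imports "HOL-Probability.Probability"
begin

(* Association configurations h in {-1,0,1}^K, coordinates indexed 1..K,
   represented as functions nat => int that vanish outside {1..K}. *)
definition configs :: "nat \<Rightarrow> (nat \<Rightarrow> int) set" where
  "configs K = {h. (\<forall>k\<in>{1..K}. h k \<in> {-1, 0, 1}) \<and> (\<forall>k. k \<notin> {1..K} \<longrightarrow> h k = 0)}"

definition binrep :: "nat \<Rightarrow> (nat \<Rightarrow> int) \<Rightarrow> nat" where
  "binrep K h = (\<Sum>k=1..K. 2 ^ (K - k) * nat \<bar>h k\<bar>)"

(* k-th binary digit (k = 1..K, most significant first) of b in {0..2^K-1} *)
definition bdigit :: "nat \<Rightarrow> nat \<Rightarrow> nat \<Rightarrow> nat" where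
  "bdigit K b k = (b div 2 ^ (K - k)) mod 2"

definition null_configs :: "nat \<Rightarrow> (nat \<Rightarrow> int) set" where
  "null_configs K = {h \<in> configs K. (\<Sum>k=1..K. \<bar>h k\<bar>) < int K}"

(* csmGmm parameter constraints: M b components for binary class b,
   mean magnitudes mu b m k, mixing probabilities p b m *)
definition csmGmm :: "nat \<Rightarrow> (nat \<Rightarrow> nat) \<Rightarrow> (nat \<Rightarrow> nat \<Rightarrow> nat \<Rightarrow> real)
                      \<Rightarrow> (nat \<Rightarrow> nat \<Rightarrow> real) \<Rightarrow> bool" where
  "csmGmm K M mu p \<longleftrightarrow>
     (\<forall>b < 2 ^ K. M b \<ge> 1) \<and> M 0 = 1 \<and>
     (\<forall>b < 2 ^ K. \<forall>m\<in>{1..M b}. \<forall>k\<in>{1..K}.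
         (bdigit K b k = 0 \<longrightarrow> mu b m k = 0) \<and> (bdigit K b k = 1 \<longrightarrow> mu b m k > 0)) \<and>
     (\<forall>b < 2 ^ K - 1. \<forall>m\<in>{1..M (2 ^ K - 1)}. \<forall>m'\<in>{1..M b}. \<forall>k\<in>{1..K}.
         mu (2 ^ K - 1) m k \<ge> mu b m' k) \<and>
     (\<forall>b < 2 ^ K. \<forall>m\<in>{1..M b}. p b m \<ge> 0) \<and>
     (\<Sum>h\<in>configs K. \<Sum>m=1..M (binrep K h). p (binrep K h) m) = 1"

definition config_dens :: "nat \<Rightarrow> (nat \<Rightarrow> nat) \<Rightarrow> (nat \<Rightarrow> nat \<Rightarrow> nat \<Rightarrow> real)
                      \<Rightarrow> (nat \<Rightarrow> nat \<Rightarrow> real) \<Rightarrow> (nat \<Rightarrow> int) \<Rightarrow> (nat \<Rightarrow> real) \<Rightarrow> real" where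
  "config_dens K M mu p h z =
     (\<Sum>m=1..M (binrep K h). p (binrep K h) m *
        (\<Prod>k=1..K. std_normal_density (z k - real_of_int (h k) * mu (binrep K h) m k)))"

definition lfdr :: "nat \<Rightarrow> (nat \<Rightarrow> nat) \<Rightarrow> (nat \<Rightarrow> nat \<Rightarrow> nat \<Rightarrow> real)
                      \<Rightarrow> (nat \<Rightarrow> nat \<Rightarrow> real) \<Rightarrow> (nat \<Rightarrow> real) \<Rightarrow> real" where
  "lfdr K M mu p z =
     (\<Sum>h\<in>null_configs K. config_dens K M mu p h z) / (\<Sum>h\<in>configs K. config_dens K M mu p h z)"

end

theory Submission
  imports Defs
begin

(* Flipping the sign of h_k permutes both the null configurations and all configurations
   without changing the mixing weights, so in numerator and denominator of lfdr the k-th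
   factor phi(z_k - a) may be replaced by its symmetrisation
   phi(z_k - a) + phi(z_k + a) = c exp(-(z_k^2 + a^2)/2) cosh(z_k a).
   Write lfdr = N / (N + A), where A collects the configurations with no zero entry; by the
   csmGmm ordering these carry the largest mean magnitudes |a|.  The kernel cosh(t a) is
   totally positive of order 2: cosh(t a) cosh(s b) <= cosh(s a) cosh(t b) for |s| <= |t| and
   |a| <= |b|.  Hence N(t) A(s) <= N(s) A(t), i.e. lfdr is non-increasing in |z_k|.  The
   comparison of z with z' follows by changing one coordinate at a time. *)

lemma cosh_abs_mono:
  fixes x y :: real
  assumes "\<bar>x\<bar> \<le> \<bar>y\<bar>"
  shows "cosh x \<le> cosh y"
  using cosh_real_nonneg_le_iff[of "\<bar>x\<bar>" "\<bar>y\<bar>"] assms by simp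

lemma cosh_mult_TP2:
  fixes s t a b :: real
  assumes "\<bar>s\<bar> \<le> \<bar>t\<bar>" "\<bar>a\<bar> \<le> \<bar>b\<bar>"
  shows "cosh (t * a) * cosh (s * b) \<le> cosh (s * a) * cosh (t * b)"
proof -
  have cosh_mult_abs: "cosh (x * y) = cosh (\<bar>x\<bar> * \<bar>y\<bar>)" for x y :: real
    by (metis abs_mult cosh_real_abs)
  define S T A B where "S = \<bar>s\<bar>" "T = \<bar>t\<bar>" "A = \<bar>a\<bar>" "B = \<bar>b\<bar>"
  have "0 \<le> S" "S \<le> T" "0 \<le> A" "A \<le> B"
    using assms by (auto simp: S_T_A_B_def)
  then have "0 \<le> (T - S) * (B - A)" "0 \<le> (T + S) * (B - A)" "0 \<le> (T - S) * (B + A)"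
    "S * A \<le> T * B" "0 \<le> T * A" "0 \<le> S * B"
    by (auto intro: mult_mono)
  then have sum_le: "\<bar>T * A + S * B\<bar> \<le> \<bar>S * A + T * B\<bar>"
    and diff_le: "\<bar>T * A - S * B\<bar> \<le> \<bar>S * A - T * B\<bar>"
    by (auto simp: algebra_simps abs_if)
  have "2 * (cosh (T * A) * cosh (S * B)) = cosh (T * A + S * B) + cosh (T * A - S * B)"
    by (simp add: cosh_add cosh_diff)
  also have "\<dots> \<le> cosh (S * A + T * B) + cosh (S * A - T * B)"
    using cosh_abs_mono[OF sum_le] cosh_abs_mono[OF diff_le] by simp
  also have "\<dots> = 2 * (cosh (S * A) * cosh (T * B))"
    by (simp add: cosh_add cosh_diff)
  finally show ?thesis
    by (simp add: cosh_mult_abs[of t a] cosh_mult_abs[of s b] cosh_mult_abs[of s a]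
        cosh_mult_abs[of t b] S_T_A_B_def)
qed

definition sym_normal_density :: "real \<Rightarrow> real \<Rightarrow> real" where
  "sym_normal_density a t = std_normal_density (t - a) + std_normal_density (t + a)"

lemma sym_normal_density_cosh:
  "sym_normal_density a t = 2 / sqrt (2 * pi) * exp (- (t\<^sup>2 + a\<^sup>2) / 2) * cosh (t * a)"
proof -
  have "exp (- ((t - a)\<^sup>2) / 2) = exp (- (t\<^sup>2 + a\<^sup>2) / 2) * exp (t * a)"
    and "exp (- ((t + a)\<^sup>2) / 2) = exp (- (t\<^sup>2 + a\<^sup>2) / 2) * exp (- (t * a))"
    by (simp_all add: exp_add[symmetric] power2_eq_square algebra_simps
        add_divide_distrib diff_divide_distrib)
  then show ?thesis
    unfolding sym_normal_density_def std_normal_density_def cosh_def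
    by (simp add: algebra_simps add_divide_distrib)
qed

lemma sym_normal_density_TP2:
  assumes "\<bar>s\<bar> \<le> \<bar>t\<bar>" "\<bar>a\<bar> \<le> \<bar>b\<bar>"
  shows "sym_normal_density a t * sym_normal_density b s
    \<le> sym_normal_density a s * sym_normal_density b t"
proof -
  define c where "c = (2 / sqrt (2 * pi))\<^sup>2 * exp (- (t\<^sup>2 + a\<^sup>2) / 2) * exp (- (s\<^sup>2 + b\<^sup>2) / 2)"
  have c_swap: "c = (2 / sqrt (2 * pi))\<^sup>2 * exp (- (s\<^sup>2 + a\<^sup>2) / 2) * exp (- (t\<^sup>2 + b\<^sup>2) / 2)"
    unfolding c_def mult.assoc exp_add[symmetric] by (simp add: field_simps)
  have "sym_normal_density a t * sym_normal_density b s = c * (cosh (t * a) * cosh (s * b))"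
    unfolding sym_normal_density_cosh c_def by (simp add: power2_eq_square algebra_simps)
  also have "\<dots> \<le> c * (cosh (s * a) * cosh (t * b))"
    by (rule mult_left_mono[OF cosh_mult_TP2[OF assms]]) (simp add: c_def)
  also have "\<dots> = sym_normal_density a s * sym_normal_density b t"
    unfolding sym_normal_density_cosh c_swap by (simp add: power2_eq_square algebra_simps)
  finally show ?thesis .
qed

lemma sum_mult_sum_le:
  fixes f g f' g' :: "_ \<Rightarrow> 'a :: ordered_comm_semiring"
  assumes "\<And>i j. i \<in> I \<Longrightarrow> j \<in> J \<Longrightarrow> f i * g j \<le> f' i * g' j"
  shows "sum f I * sum g J \<le> sum f' I * sum g' J"
  unfolding sum_product by (intro sum_mono assms)

lemma divide_add_le_divide_add:
  fixes a b c d :: "'a :: linordered_field"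
  assumes "a * d \<le> c * b" "0 < a + b" "0 < c + d"
  shows "a / (a + b) \<le> c / (c + d)"
  using assms by (simp add: divide_simps algebra_simps)

lemma le_by_coordinate_updates:
  fixes F :: "(nat \<Rightarrow> 'a) \<Rightarrow> 'b :: preorder"
  assumes local: "\<And>w w'. (\<And>k. k \<in> {1..K} \<Longrightarrow> w k = w' k) \<Longrightarrow> F w = F w'"
    and update: "\<And>k w. k \<in> {1..K} \<Longrightarrow> F (w(k := z k)) \<le> F (w(k := z' k))"
  shows "F z \<le> F z'"
proof -
  define u where "u n i = (if 1 \<le> i \<and> i \<le> n then z i else z' i)" for n i
  have "F (u n) \<le> F z'" if "n \<le> K" for n
    using that
  proof (induction n)
    case 0
    have "u 0 = z'" by (auto simp: u_def fun_eq_iff)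
    then show ?case by simp
  next
    case (Suc n)
    have "u (Suc n) = (u n)(Suc n := z (Suc n))" "u n = (u n)(Suc n := z' (Suc n))"
      by (auto simp: u_def fun_eq_iff)
    then have "F (u (Suc n)) \<le> F (u n)"
      using update[of "Suc n" "u n"] Suc.prems by simp
    also have "F (u n) \<le> F z'"
      using Suc by simp
    finally show ?case .
  qed
  moreover have "F z = F (u K)"
    by (rule local) (simp add: u_def)
  ultimately show ?thesis by simp
qed

lemma finite_configs: "finite (configs K)"
proof -
  let ?ext = "\<lambda>f k. if k \<in> {1..K} then f k else 0"
  have "configs K \<subseteq> ?ext ` (Pi\<^sub>E {1..K} (\<lambda>_. {-1, 0, 1 :: int}))"
  proof
    fix h assume h: "h \<in> configs K"
    then have "h = ?ext (restrict h {1..K})" "restrict h {1..K} \<in> Pi\<^sub>E {1..K} (\<lambda>_. {-1, 0, 1})"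
      unfolding configs_def by (auto simp: fun_eq_iff)
    then show "h \<in> ?ext ` (Pi\<^sub>E {1..K} (\<lambda>_. {-1, 0, 1}))" by blast
  qed
  then show ?thesis by (rule finite_subset) (intro finite_imageI finite_PiE; simp)
qed

lemma null_configs_subset_configs: "null_configs K \<subseteq> configs K"
  unfolding null_configs_def by auto

lemma configs_abs_le_1: "h \<in> configs K \<Longrightarrow> k \<in> {1..K} \<Longrightarrow> \<bar>h k\<bar> \<le> 1"
  unfolding configs_def by fastforce

lemma null_configs_iff:
  assumes h: "h \<in> configs K"
  shows "h \<in> null_configs K \<longleftrightarrow> (\<exists>j\<in>{1..K}. h j = 0)"
proof
  assume "h \<in> null_configs K"
  then have "(\<Sum>k=1..K. \<bar>h k\<bar>) \<noteq> (\<Sum>k=1..K. 1)"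
    unfolding null_configs_def by simp
  then obtain j where "j \<in> {1..K}" "\<bar>h j\<bar> \<noteq> 1"
    by (metis (mono_tags, lifting) sum.cong)
  then show "\<exists>j\<in>{1..K}. h j = 0"
    using h unfolding configs_def by force
next
  assume "\<exists>j\<in>{1..K}. h j = 0"
  then have "(\<Sum>k=1..K. \<bar>h k\<bar>) < (\<Sum>k=1..K. 1)"
    by (intro sum_strict_mono_ex1) (auto simp: configs_abs_le_1[OF h])
  then show "h \<in> null_configs K"
    using h unfolding null_configs_def by simp
qed

lemma alt_configs_abs_eq_1:
  assumes "h \<in> configs K - null_configs K" "k \<in> {1..K}"
  shows "\<bar>h k\<bar> = 1"
proof -
  have "h k \<noteq> 0" "\<bar>h k\<bar> \<le> 1"
    using assms null_configs_iff[of h K] configs_abs_le_1[of h K k] by auto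
  then show ?thesis by linarith
qed

lemma sum_pow2_desc: "(\<Sum>k=1..K. (2::nat) ^ (K - k)) = 2 ^ K - 1"
proof -
  have "(\<Sum>k=1..K. (2::nat) ^ (K - k)) = (\<Sum>i=0..<K. 2 ^ i)"
    by (rule sum.reindex_bij_witness[where i="\<lambda>i. K - i" and j="\<lambda>k. K - k"]) auto
  then show ?thesis by (simp add: sum_power2)
qed

lemma binrep_le:
  assumes "h \<in> configs K"
  shows "binrep K h \<le> 2 ^ K - 1"
proof -
  have "binrep K h \<le> (\<Sum>k=1..K. 2 ^ (K - k))"
    unfolding binrep_def using configs_abs_le_1[OF assms] by (intro sum_mono) fastforce
  then show ?thesis by (simp only: sum_pow2_desc)
qed

lemma binrep_less: "h \<in> configs K \<Longrightarrow> binrep K h < 2 ^ K"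
  using binrep_le[of h K] by (simp add: le_diff_conv2 Suc_le_eq)

lemma binrep_null_less:
  assumes "h \<in> null_configs K"
  shows "binrep K h < 2 ^ K - 1"
proof -
  have h: "h \<in> configs K" using assms null_configs_subset_configs by blast
  then obtain j where "j \<in> {1..K}" "h j = 0" using assms null_configs_iff by blast
  then have "binrep K h < (\<Sum>k=1..K. 2 ^ (K - k))"
    unfolding binrep_def using configs_abs_le_1[OF h] by (intro sum_strict_mono_ex1) fastforce+
  then show ?thesis by (simp only: sum_pow2_desc)
qed

lemma binrep_alt_eq:
  assumes "h \<in> configs K - null_configs K"
  shows "binrep K h = 2 ^ K - 1"
  unfolding binrep_def sum_pow2_desc[symmetric]
  using alt_configs_abs_eq_1[OF assms] by (intro sum.cong) auto

lemma csmGmm_weight_nonneg: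
  "csmGmm K M mu p \<Longrightarrow> b < 2 ^ K \<Longrightarrow> m \<in> {1..M b} \<Longrightarrow> 0 \<le> p b m"
  unfolding csmGmm_def by blast

lemma csmGmm_mean_nonneg:
  assumes "csmGmm K M mu p" "b < 2 ^ K" "m \<in> {1..M b}" "k \<in> {1..K}"
  shows "0 \<le> mu b m k"
proof -
  have "(bdigit K b k = 0 \<longrightarrow> mu b m k = 0) \<and> (bdigit K b k = 1 \<longrightarrow> mu b m k > 0)"
    using assms unfolding csmGmm_def by blast
  moreover have "bdigit K b k = 0 \<or> bdigit K b k = 1" unfolding bdigit_def by auto
  ultimately show ?thesis by auto
qed

lemma csmGmm_mean_le_full:
  "csmGmm K M mu p \<Longrightarrow> b < 2 ^ K - 1 \<Longrightarrow> m \<in> {1..M b} \<Longrightarrow> m' \<in> {1..M (2 ^ K - 1)}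
    \<Longrightarrow> k \<in> {1..K} \<Longrightarrow> mu b m k \<le> mu (2 ^ K - 1) m' k"
  unfolding csmGmm_def by blast

definition config_mean ::
  "nat \<Rightarrow> (nat \<Rightarrow> nat \<Rightarrow> nat \<Rightarrow> real) \<Rightarrow> (nat \<Rightarrow> int) \<Rightarrow> nat \<Rightarrow> nat \<Rightarrow> real" where
  "config_mean K mu h m k = real_of_int (h k) * mu (binrep K h) m k"

lemma csmGmm_null_mean_le_alt_mean:
  assumes g: "csmGmm K M mu p" and k: "k \<in> {1..K}"
    and h: "h \<in> null_configs K" "m \<in> {1..M (binrep K h)}"
    and h': "h' \<in> configs K - null_configs K" "m' \<in> {1..M (binrep K h')}"
  shows "\<bar>config_mean K mu h m k\<bar> \<le> \<bar>config_mean K mu h' m' k\<bar>"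
proof -
  have hc: "h \<in> configs K" and hc': "h' \<in> configs K"
    using h h' null_configs_subset_configs by blast+
  have b: "binrep K h < 2 ^ K - 1" and b': "binrep K h' = 2 ^ K - 1"
    using binrep_null_less[OF h(1)] binrep_alt_eq[OF h'(1)] .
  have mu: "0 \<le> mu (binrep K h) m k" and mu': "0 \<le> mu (binrep K h') m' k"
    using csmGmm_mean_nonneg[OF g binrep_less[OF hc] h(2) k]
      csmGmm_mean_nonneg[OF g binrep_less[OF hc'] h'(2) k] .
  have "\<bar>config_mean K mu h m k\<bar> \<le> mu (binrep K h) m k"
    using configs_abs_le_1[OF hc k] mu
    by (simp add: config_mean_def abs_mult mult_left_le_one_le flip: of_int_abs)
  also have "\<dots> \<le> mu (2 ^ K - 1) m' k"
    using csmGmm_mean_le_full[OF g b h(2)] h'(2) k b' by simp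
  also have "\<dots> = \<bar>config_mean K mu h' m' k\<bar>"
    using alt_configs_abs_eq_1[OF h'(1) k] mu' b'
    by (simp add: config_mean_def abs_mult flip: of_int_abs)
  finally show ?thesis .
qed

lemma config_dens_nonneg:
  "csmGmm K M mu p \<Longrightarrow> h \<in> configs K \<Longrightarrow> 0 \<le> config_dens K M mu p h z"
  unfolding config_dens_def
  by (intro sum_nonneg mult_nonneg_nonneg prod_nonneg normal_density_nonneg)
    (auto intro: csmGmm_weight_nonneg binrep_less)

lemma sum_config_dens_pos:
  assumes g: "csmGmm K M mu p"
  shows "0 < (\<Sum>h\<in>configs K. config_dens K M mu p h z)"
proof -
  have "(\<Sum>h\<in>configs K. \<Sum>m=1..M (binrep K h). p (binrep K h) m) = 1"
    using g unfolding csmGmm_def by blast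
  then obtain h m where hm: "h \<in> configs K" "m \<in> {1..M (binrep K h)}" "p (binrep K h) m \<noteq> 0"
    by (metis (no_types, lifting) sum.neutral zero_neq_one)
  have "0 < p (binrep K h) m"
    using hm csmGmm_weight_nonneg[OF g binrep_less[OF hm(1)] hm(2)] by simp
  then have "0 < config_dens K M mu p h z"
    unfolding config_dens_def
    by (intro sum_pos2[OF _ hm(2)] mult_nonneg_nonneg mult_pos_pos prod_nonneg prod_pos
        normal_density_pos csmGmm_weight_nonneg[OF g binrep_less[OF hm(1)]]) auto
  then show ?thesis
    by (intro sum_pos2[OF finite_configs hm(1)] config_dens_nonneg[OF g])
qed

definition off_coord_weight :: "nat \<Rightarrow> (nat \<Rightarrow> nat \<Rightarrow> nat \<Rightarrow> real) \<Rightarrow> (nat \<Rightarrow> nat \<Rightarrow> real)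
    \<Rightarrow> nat \<Rightarrow> (nat \<Rightarrow> real) \<Rightarrow> (nat \<Rightarrow> int) \<Rightarrow> nat \<Rightarrow> real" where
  "off_coord_weight K mu p k z h m =
     p (binrep K h) m * (\<Prod>j\<in>{1..K} - {k}. std_normal_density (z j - config_mean K mu h m j))"

lemma off_coord_weight_nonneg:
  "csmGmm K M mu p \<Longrightarrow> h \<in> configs K \<Longrightarrow> m \<in> {1..M (binrep K h)}
    \<Longrightarrow> 0 \<le> off_coord_weight K mu p k z h m"
  unfolding off_coord_weight_def
  by (intro mult_nonneg_nonneg prod_nonneg normal_density_nonneg csmGmm_weight_nonneg)
    (auto intro: binrep_less)

lemma config_dens_fun_upd:
  assumes "k \<in> {1..K}"
  shows "config_dens K M mu p h (z(k := t)) = (\<Sum>m=1..M (binrep K h).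
     off_coord_weight K mu p k z h m * std_normal_density (t - config_mean K mu h m k))"
  unfolding config_dens_def
proof (rule sum.cong[OF refl])
  fix m
  have "(\<Prod>j=1..K. std_normal_density ((z(k := t)) j - config_mean K mu h m j))
     = std_normal_density (t - config_mean K mu h m k) *
       (\<Prod>j\<in>{1..K} - {k}. std_normal_density (z j - config_mean K mu h m j))"
    using assms by (simp add: prod.remove[of _ k])
  then show "p (binrep K h) m * (\<Prod>j=1..K. std_normal_density ((z(k := t)) j
        - real_of_int (h j) * mu (binrep K h) m j))
     = off_coord_weight K mu p k z h m * std_normal_density (t - config_mean K mu h m k)"
    by (simp add: off_coord_weight_def config_mean_def)
qed

definition flip_coord :: "nat \<Rightarrow> (nat \<Rightarrow> int) \<Rightarrow> nat \<Rightarrow> int" where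
  "flip_coord k h = h(k := - h k)"

lemma flip_coord_flip_coord [simp]: "flip_coord k (flip_coord k h) = h"
  unfolding flip_coord_def by auto

lemma binrep_flip_coord [simp]: "binrep K (flip_coord k h) = binrep K h"
  unfolding binrep_def flip_coord_def by (rule sum.cong) auto

lemma config_mean_flip_coord:
  "config_mean K mu (flip_coord k h) m j =
     (if j = k then - config_mean K mu h m j else config_mean K mu h m j)"
  unfolding config_mean_def binrep_flip_coord by (simp add: flip_coord_def)

lemma off_coord_weight_flip_coord [simp]:
  "off_coord_weight K mu p k z (flip_coord k h) m = off_coord_weight K mu p k z h m"
  unfolding off_coord_weight_def by (auto intro!: prod.cong simp: config_mean_flip_coord)

lemma flip_coord_configs: "h \<in> configs K \<Longrightarrow> flip_coord k h \<in> configs K"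
  unfolding configs_def flip_coord_def by auto

lemma flip_coord_null_configs:
  assumes "h \<in> null_configs K"
  shows "flip_coord k h \<in> null_configs K"
proof -
  have "(\<Sum>j=1..K. \<bar>flip_coord k h j\<bar>) = (\<Sum>j=1..K. \<bar>h j\<bar>)"
    by (rule sum.cong) (auto simp: flip_coord_def)
  then show ?thesis
    using assms flip_coord_configs unfolding null_configs_def by auto
qed

lemma sum_config_dens_symmetrize:
  assumes k: "k \<in> {1..K}" and S: "\<And>h. h \<in> S \<Longrightarrow> flip_coord k h \<in> S"
  shows "2 * (\<Sum>h\<in>S. config_dens K M mu p h (z(k := t))) = (\<Sum>h\<in>S. \<Sum>m=1..M (binrep K h).
     off_coord_weight K mu p k z h m * sym_normal_density (config_mean K mu h m k) t)"
proof -
  have "(\<Sum>h\<in>S. config_dens K M mu p h (z(k := t)))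
      = (\<Sum>h\<in>S. config_dens K M mu p (flip_coord k h) (z(k := t)))"
    by (rule sum.reindex_bij_witness[where i="flip_coord k" and j="flip_coord k"]) (auto simp: S)
  then have "2 * (\<Sum>h\<in>S. config_dens K M mu p h (z(k := t)))
      = (\<Sum>h\<in>S. config_dens K M mu p h (z(k := t))
          + config_dens K M mu p (flip_coord k h) (z(k := t)))"
    by (simp add: sum.distrib)
  then show ?thesis
    unfolding config_dens_fun_upd[OF k] sym_normal_density_def
    by (simp add: config_mean_flip_coord sum.distrib[symmetric] algebra_simps)
qed

lemma lfdr_fun_upd_antimono_abs:
  assumes g: "csmGmm K M mu p" and k: "k \<in> {1..K}" and st: "\<bar>s\<bar> \<le> \<bar>t\<bar>"
  shows "lfdr K M mu p (z(k := t)) \<le> lfdr K M mu p (z(k := s))"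
proof -
  define W where "W S u = (\<Sum>h\<in>S. \<Sum>m=1..M (binrep K h).
    off_coord_weight K mu p k z h m * sym_normal_density (config_mean K mu h m k) u)" for S u
  let ?N = "null_configs K" and ?A = "configs K - null_configs K"
  have null_eq: "2 * (\<Sum>h\<in>?N. config_dens K M mu p h (z(k := u))) = W ?N u" for u
    unfolding W_def by (rule sum_config_dens_symmetrize[OF k flip_coord_null_configs])
  have "2 * (\<Sum>h\<in>configs K. config_dens K M mu p h (z(k := u))) = W (configs K) u" for u
    unfolding W_def by (rule sum_config_dens_symmetrize[OF k flip_coord_configs])
  moreover have "W (configs K) u = W ?N u + W ?A u" for u
    unfolding W_def using sum.subset_diff[OF null_configs_subset_configs finite_configs]
    by (simp add: add.commute)
  ultimately have total_eq:
    "2 * (\<Sum>h\<in>configs K. config_dens K M mu p h (z(k := u))) = W ?N u + W ?A u" for u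
    by simp
  have lfdr_eq: "lfdr K M mu p (z(k := u)) = W ?N u / (W ?N u + W ?A u)" for u
  proof -
    have "lfdr K M mu p (z(k := u)) = (2 * (\<Sum>h\<in>?N. config_dens K M mu p h (z(k := u)))) /
        (2 * (\<Sum>h\<in>configs K. config_dens K M mu p h (z(k := u))))"
      unfolding lfdr_def by simp
    then show ?thesis by (simp only: null_eq total_eq)
  qed
  have pos: "0 < W ?N u + W ?A u" for u
    using sum_config_dens_pos[OF g, of "z(k := u)"] total_eq[of u] by linarith
  have "W ?N t * W ?A s \<le> W ?N s * W ?A t"
    unfolding W_def
  proof (intro sum_mult_sum_le)
    fix h m h' m'
    assume h: "h \<in> ?N" "m \<in> {1..M (binrep K h)}" and h': "h' \<in> ?A" "m' \<in> {1..M (binrep K h')}"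
    have "0 \<le> off_coord_weight K mu p k z h m * off_coord_weight K mu p k z h' m'"
      using h h' null_configs_subset_configs
      by (intro mult_nonneg_nonneg off_coord_weight_nonneg[OF g]) auto
    from mult_left_mono[OF sym_normal_density_TP2[OF st
          csmGmm_null_mean_le_alt_mean[OF g k h h']] this]
    show "off_coord_weight K mu p k z h m * sym_normal_density (config_mean K mu h m k) t *
        (off_coord_weight K mu p k z h' m' * sym_normal_density (config_mean K mu h' m' k) s)
      \<le> off_coord_weight K mu p k z h m * sym_normal_density (config_mean K mu h m k) s *
        (off_coord_weight K mu p k z h' m' * sym_normal_density (config_mean K mu h' m' k) t)"
      by (simp add: algebra_simps)
  qed
  then show ?thesis
    unfolding lfdr_eq by (rule divide_add_le_divide_add[OF _ pos pos])
qed

lemma lfdr_cong: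
  assumes "\<And>k. k \<in> {1..K} \<Longrightarrow> z k = z' k"
  shows "lfdr K M mu p z = lfdr K M mu p z'"
  unfolding lfdr_def config_dens_def by (simp add: assms)

theorem theorem1:
  fixes K :: nat and M :: "nat \<Rightarrow> nat" and mu :: "nat \<Rightarrow> nat \<Rightarrow> nat \<Rightarrow> real"
    and p :: "nat \<Rightarrow> nat \<Rightarrow> real"
  assumes "K \<ge> 2"
    and "csmGmm K M mu p"
  shows "(\<forall>k\<in>{1..K}. \<forall>z :: nat \<Rightarrow> real. \<forall>s t :: real. 0 < s \<longrightarrow> s \<le> t \<longrightarrow>
            lfdr K M mu p (z(k := t)) \<le> lfdr K M mu p (z(k := s)))
       \<and> (\<forall>k\<in>{1..K}. \<forall>z :: nat \<Rightarrow> real. \<forall>s t :: real. s \<le> t \<longrightarrow> t < 0 \<longrightarrow>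
            lfdr K M mu p (z(k := s)) \<le> lfdr K M mu p (z(k := t)))
       \<and> (\<forall>z z' :: nat \<Rightarrow> real.
            (\<forall>k\<in>{1..K}. sgn (z k) = sgn (z' k) \<and> \<bar>z k\<bar> \<ge> \<bar>z' k\<bar>) \<longrightarrow>
            lfdr K M mu p z \<le> lfdr K M mu p z')"
proof (intro conjI ballI allI impI)
  fix k z and s t :: real
  assume k: "k \<in> {1..K}"
  show "lfdr K M mu p (z(k := t)) \<le> lfdr K M mu p (z(k := s))" if "0 < s" "s \<le> t"
    using that by (intro lfdr_fun_upd_antimono_abs[OF assms(2) k]) simp
  show "lfdr K M mu p (z(k := s)) \<le> lfdr K M mu p (z(k := t))" if "s \<le> t" "t < 0"
    using that by (intro lfdr_fun_upd_antimono_abs[OF assms(2) k]) simp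
next
  fix z z' :: "nat \<Rightarrow> real"
  assume zz': "\<forall>k\<in>{1..K}. sgn (z k) = sgn (z' k) \<and> \<bar>z k\<bar> \<ge> \<bar>z' k\<bar>"
  show "lfdr K M mu p z \<le> lfdr K M mu p z'"
  proof (rule le_by_coordinate_updates[where F = "lfdr K M mu p"])
    show "lfdr K M mu p w = lfdr K M mu p w'" if "\<And>k. k \<in> {1..K} \<Longrightarrow> w k = w' k" for w w'
      using that by (rule lfdr_cong)
    show "lfdr K M mu p (w(k := z k)) \<le> lfdr K M mu p (w(k := z' k))" if "k \<in> {1..K}" for k w
      using zz' that by (intro lfdr_fun_upd_antimono_abs[OF assms(2) that]) simp
  qed
qed

end
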